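(* Let $\nu>0$ with $\nu\neq 2$, let $\beta$ be a constant, $K$ a smooth positive function, $C(u)=\beta K(u)$, and $J(u)=\int K(u)\,du$ an antiderivative of $K$. Then the equation $C(u)u_t=z^{-\nu}\left(K(u)z^{\nu}u_z\right)_z$ ($z>0$) admits the Lie point symmetry generators $$\widetilde Y_1=tz\partial_z+t^2\partial_t-\left(\frac{\beta}{4}z^2+\frac{1+\nu}{2}t\right)\frac{J(u)}{K(u)}\partial_u,\quad \widetilde Y_2=\frac{z}{2}\partial_z+t\partial_t,\quad \widetilde Y_3=\partial_t,\quad \widetilde Y_4=-\frac{J(u)}{K(u)}\partial_u .$$
   Context: Here $u=u(z,t)$. A vector field $Y=\xi\partial_z+\tau\partial_t+\eta\partial_u$ (coefficients depending on $z,t,u$) is an admitted Lie point symmetry generator of the equation if its second prolongation annihilates $C(u)u_t-K'(u)u_z^2-K(u)u_{zz}-\frac{\nu}{z}K(u)u_z$ on the solution manifold of the equation (equivalently, the one-parameter local group it generates maps solutions to solutions). *)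

theory Defs
  imports "HOL-Analysis.Analysis"
begin

text \<open>Jet space for one dependent variable u and two independent variables z, t.
  A jet point j assigns to the multi-index (i,k) the value of the derivative
  of u taken i times in z and k times in t; so j(0,0) = u, j(1,0) = u_z,
  j(0,1) = u_t, j(2,0) = u_zz, j(1,1) = u_zt, j(0,2) = u_tt.\<close>

type_synonym jet = "nat \<times> nat \<Rightarrow> real"
type_synonym dfun = "real \<Rightarrow> real \<Rightarrow> jet \<Rightarrow> real"

definition pd_z :: "dfun \<Rightarrow> dfun" where
  "pd_z f z t j = deriv (\<lambda>x. f x t j) z"

definition pd_t :: "dfun \<Rightarrow> dfun" where
  "pd_t f z t j = deriv (\<lambda>x. f z x j) t"

definition pd_j :: "nat \<times> nat \<Rightarrow> dfun \<Rightarrow> dfun" where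
  "pd_j a f z t j = deriv (\<lambda>v. f z t (j(a := v))) (j a)"

definition jet_idx :: "nat \<Rightarrow> (nat \<times> nat) set" where
  "jet_idx n = {(i, k). i + k \<le> n}"

text \<open>Total derivatives (acting on differential functions of order at most 2).\<close>

definition tot_z :: "dfun \<Rightarrow> dfun" where
  "tot_z f z t j = pd_z f z t j + (\<Sum>a\<in>jet_idx 2. j (Suc (fst a), snd a) * pd_j a f z t j)"

definition tot_t :: "dfun \<Rightarrow> dfun" where
  "tot_t f z t j = pd_t f z t j + (\<Sum>a\<in>jet_idx 2. j (fst a, Suc (snd a)) * pd_j a f z t j)"

text \<open>Characteristic Q = eta - xi u_z - tau u_t of Y = xi d_z + tau d_t + eta d_u.\<close>

definition charac :: "(real \<Rightarrow> real \<Rightarrow> real \<Rightarrow> real) \<Rightarrow> (real \<Rightarrow> real \<Rightarrow> real \<Rightarrow> real)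
    \<Rightarrow> (real \<Rightarrow> real \<Rightarrow> real \<Rightarrow> real) \<Rightarrow> dfun" where
  "charac \<xi> \<tau> \<eta> z t j =
     \<eta> z t (j (0,0)) - \<xi> z t (j (0,0)) * j (1,0) - \<tau> z t (j (0,0)) * j (0,1)"

definition prol_coeff :: "(real \<Rightarrow> real \<Rightarrow> real \<Rightarrow> real) \<Rightarrow> (real \<Rightarrow> real \<Rightarrow> real \<Rightarrow> real)
    \<Rightarrow> (real \<Rightarrow> real \<Rightarrow> real \<Rightarrow> real) \<Rightarrow> nat \<times> nat \<Rightarrow> dfun" where
  "prol_coeff \<xi> \<tau> \<eta> a z t j =
     (tot_z ^^ fst a) ((tot_t ^^ snd a) (charac \<xi> \<tau> \<eta>)) z t j
     + \<xi> z t (j (0,0)) * j (Suc (fst a), snd a) + \<tau> z t (j (0,0)) * j (fst a, Suc (snd a))"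

definition prol2 :: "(real \<Rightarrow> real \<Rightarrow> real \<Rightarrow> real) \<Rightarrow> (real \<Rightarrow> real \<Rightarrow> real \<Rightarrow> real)
    \<Rightarrow> (real \<Rightarrow> real \<Rightarrow> real \<Rightarrow> real) \<Rightarrow> dfun \<Rightarrow> dfun" where
  "prol2 \<xi> \<tau> \<eta> F z t j =
     \<xi> z t (j (0,0)) * pd_z F z t j + \<tau> z t (j (0,0)) * pd_t F z t j
     + (\<Sum>a\<in>jet_idx 2. prol_coeff \<xi> \<tau> \<eta> a z t j * pd_j a F z t j)"

definition admits_symmetry :: "(real \<Rightarrow> real \<Rightarrow> real \<Rightarrow> real) \<Rightarrow> (real \<Rightarrow> real \<Rightarrow> real \<Rightarrow> real)
    \<Rightarrow> (real \<Rightarrow> real \<Rightarrow> real \<Rightarrow> real) \<Rightarrow> dfun \<Rightarrow> (real \<Rightarrow> real \<Rightarrow> bool) \<Rightarrow> bool" where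
  "admits_symmetry \<xi> \<tau> \<eta> F D \<longleftrightarrow>
     (\<forall>z t j. D z t \<longrightarrow> F z t j = 0 \<longrightarrow> prol2 \<xi> \<tau> \<eta> F z t j = 0)"

definition diff_eq :: "real \<Rightarrow> (real \<Rightarrow> real) \<Rightarrow> (real \<Rightarrow> real) \<Rightarrow> dfun" where
  "diff_eq \<nu> C K z t j =
     C (j (0,0)) * j (0,1) - deriv K (j (0,0)) * (j (1,0))^2 - K (j (0,0)) * j (2,0)
     - \<nu> / z * K (j (0,0)) * j (1,0)"

definition smooth_fun :: "(real \<Rightarrow> real) \<Rightarrow> bool" where
  "smooth_fun f \<longleftrightarrow> (\<forall>n x. (deriv ^^ n) f differentiable (at x))"

end

theory Submission
  imports Defs
begin

(* Each generator is a member of the four-parameter family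
     xi = (a t + b) z,   tau = a t^2 + 2 b t + c,
     eta = (d - (1 + nu)/2 a t - beta/4 a z^2) g(u)   with g = J / K,
   namely a Y1 + 2 b Y2 + c Y3 - d Y4.  For this ansatz the characteristic and its total derivatives
   up to second order are explicit, and the only properties of g that enter are (K g)' = K and
   (K g)'' = K'.  Substituting u_zz from the equation into the second prolongation leaves an
   expression that vanishes identically. *)

lemma jet_idx_2: "jet_idx 2 = {(0,0), (1,0), (0,1), (2,0), (1,1), (0,2)}"
  unfolding jet_idx_def by auto

lemma sum_jet_idx_2:
  "(\<Sum>a\<in>jet_idx 2. h a) = h (0,0) + h (1,0) + h (0,1) + h (2,0) + h (1,1) + (h (0,2) :: real)"
  unfolding jet_idx_2 by simp

lemma tot_z_expand:
  "tot_z f z t j = pd_z f z t j + j (1,0) * pd_j (0,0) f z t j + j (2,0) * pd_j (1,0) f z t j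
     + j (1,1) * pd_j (0,1) f z t j + j (3,0) * pd_j (2,0) f z t j
     + j (2,1) * pd_j (1,1) f z t j + j (1,2) * pd_j (0,2) f z t j"
  unfolding tot_z_def sum_jet_idx_2 by (simp add: numeral_eq_Suc)

lemma tot_t_expand:
  "tot_t f z t j = pd_t f z t j + j (0,1) * pd_j (0,0) f z t j + j (1,1) * pd_j (1,0) f z t j
     + j (0,2) * pd_j (0,1) f z t j + j (2,1) * pd_j (2,0) f z t j
     + j (1,2) * pd_j (1,1) f z t j + j (0,3) * pd_j (0,2) f z t j"
  unfolding tot_t_def sum_jet_idx_2 by (simp add: numeral_eq_Suc)

lemma smooth_fun_has_real_derivative:
  assumes "smooth_fun f"
  shows "((deriv ^^ n) f has_real_derivative (deriv ^^ Suc n) f x) (at x)"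
  using assms unfolding smooth_fun_def by (simp add: DERIV_deriv_iff_real_differentiable)

lemma antiderivative_div_has_derivatives:
  fixes J K K1 K2 :: "real \<Rightarrow> real"
  assumes JD: "\<And>x. (J has_real_derivative K x) (at x)"
    and KD: "\<And>x. (K has_real_derivative K1 x) (at x)"
    and K1D: "\<And>x. (K1 has_real_derivative K2 x) (at x)"
    and K0: "\<And>x. K x \<noteq> 0"
  obtains g1 g2 where "\<And>x. ((\<lambda>x. J x / K x) has_real_derivative g1 x) (at x)"
    and "\<And>x. (g1 has_real_derivative g2 x) (at x)"
    and "\<And>x. K x * g1 x + K1 x * (J x / K x) = K x"
    and "\<And>x. K x * g2 x + 2 * K1 x * g1 x + K2 x * (J x / K x) = K1 x"
proof
  define g where "g x = J x / K x" for x
  define g1 where "g1 x = (K x - K1 x * g x) / K x" for x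
  show "((\<lambda>x. J x / K x) has_real_derivative g1 x) (at x)" for x
    unfolding g1_def g_def
    by (auto intro!: derivative_eq_intros JD KD simp: K0 field_simps power2_eq_square)
  show "(g1 has_real_derivative (K1 x - 2 * K1 x * g1 x - K2 x * g x) / K x) (at x)" for x
    unfolding g1_def g_def
    by (auto intro!: derivative_eq_intros JD KD K1D simp: K0 field_simps power2_eq_square)
  show "K x * g1 x + K1 x * (J x / K x) = K x" for x
    unfolding g1_def g_def using K0 by (simp add: field_simps)
  show "K x * ((K1 x - 2 * K1 x * g1 x - K2 x * g x) / K x) + 2 * K1 x * g1 x
      + K2 x * (J x / K x) = K1 x" for x
    unfolding g_def using K0 by (simp add: field_simps)
qed

lemma partials_diff_eq:
  fixes K K2 :: "real \<Rightarrow> real" and \<nu> \<beta> z t :: real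
  assumes KD: "\<And>x. (K has_real_derivative deriv K x) (at x)"
    and K1D: "\<And>x. (deriv K has_real_derivative K2 x) (at x)"
    and "z \<noteq> 0"
  defines "F \<equiv> diff_eq \<nu> (\<lambda>u. \<beta> * K u) K"
  shows "pd_z F z t j = \<nu> / z^2 * K (j (0,0)) * j (1,0)"
    and "pd_t F z t j = 0"
    and "pd_j (0,0) F z t j = \<beta> * deriv K (j (0,0)) * j (0,1) - K2 (j (0,0)) * (j (1,0))^2
          - deriv K (j (0,0)) * j (2,0) - \<nu> / z * deriv K (j (0,0)) * j (1,0)"
    and "pd_j (1,0) F z t j = - deriv K (j (0,0)) * (2 * j (1,0)) - \<nu> / z * K (j (0,0))"
    and "pd_j (0,1) F z t j = \<beta> * K (j (0,0))"
    and "pd_j (2,0) F z t j = - K (j (0,0))"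
    and "pd_j (1,1) F z t j = 0"
    and "pd_j (0,2) F z t j = 0"
  unfolding F_def pd_z_def pd_t_def pd_j_def diff_eq_def
  using \<open>z \<noteq> 0\<close>
  by (safe intro!: DERIV_imp_deriv)
    (auto intro!: derivative_eq_intros KD K1D simp: field_simps power2_eq_square)

context
  fixes g g1 g2 :: "real \<Rightarrow> real" and p0 p1 b0 b1 b2 c0 c1 c2 :: real
  assumes gD: "\<And>x. (g has_real_derivative g1 x) (at x)"
    and g1D: "\<And>x. (g1 has_real_derivative g2 x) (at x)"
begin

abbreviation ansatz_char :: dfun where
  "ansatz_char \<equiv> \<lambda>z t j. (c0 + c1 * t + c2 * z^2) * g (j (0,0))
     - (p1 * t + p0) * z * j (1,0) - (b2 * t^2 + b1 * t + b0) * j (0,1)"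

abbreviation ansatz_char_z :: dfun where
  "ansatz_char_z \<equiv> \<lambda>z t j. 2 * c2 * z * g (j (0,0)) - (p1 * t + p0) * j (1,0)
     + j (1,0) * ((c0 + c1 * t + c2 * z^2) * g1 (j (0,0))) - j (2,0) * ((p1 * t + p0) * z)
     - j (1,1) * (b2 * t^2 + b1 * t + b0)"

lemma charac_ansatz:
  "charac (\<lambda>z t u. (p1 * t + p0) * z) (\<lambda>z t u. b2 * t^2 + b1 * t + b0)
     (\<lambda>z t u. (c0 + c1 * t + c2 * z^2) * g u) = ansatz_char"
  unfolding charac_def by (simp add: fun_eq_iff)

lemma pd_j_ansatz_char:
  "pd_j (0,0) ansatz_char z t j = (c0 + c1 * t + c2 * z^2) * g1 (j (0,0))"
  "pd_j (1,0) ansatz_char z t j = - ((p1 * t + p0) * z)"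
  "pd_j (0,1) ansatz_char z t j = - (b2 * t^2 + b1 * t + b0)"
  "pd_j (2,0) ansatz_char z t j = 0"
  "pd_j (1,1) ansatz_char z t j = 0"
  "pd_j (0,2) ansatz_char z t j = 0"
  unfolding pd_j_def by (auto intro!: DERIV_imp_deriv derivative_eq_intros gD)

lemma tot_t_ansatz_char:
  "tot_t ansatz_char z t j = c1 * g (j (0,0)) - p1 * z * j (1,0) - (2 * b2 * t + b1) * j (0,1)
     + j (0,1) * ((c0 + c1 * t + c2 * z^2) * g1 (j (0,0))) - j (1,1) * ((p1 * t + p0) * z)
     - j (0,2) * (b2 * t^2 + b1 * t + b0)"
proof -
  have "pd_t ansatz_char z t j = c1 * g (j (0,0)) - p1 * z * j (1,0) - (2 * b2 * t + b1) * j (0,1)"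
    unfolding pd_t_def by (auto intro!: DERIV_imp_deriv derivative_eq_intros)
  then show ?thesis
    unfolding tot_t_expand pd_j_ansatz_char by (simp add: algebra_simps)
qed

lemma tot_z_ansatz_char: "tot_z ansatz_char = ansatz_char_z"
proof (intro ext)
  fix z t j
  have "pd_z ansatz_char z t j = 2 * c2 * z * g (j (0,0)) - (p1 * t + p0) * j (1,0)"
    unfolding pd_z_def by (auto intro!: DERIV_imp_deriv derivative_eq_intros)
  then show "tot_z ansatz_char z t j = ansatz_char_z z t j"
    unfolding tot_z_expand pd_j_ansatz_char by (simp add: algebra_simps)
qed

lemma tot_zz_ansatz_char:
  "tot_z (tot_z ansatz_char) z t j = 2 * c2 * g (j (0,0)) + j (1,0) * 2 * c2 * z * g1 (j (0,0))
     - (p1 * t + p0) * j (2,0)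
     + j (1,0) * (2 * c2 * z * g1 (j (0,0)) + j (1,0) * ((c0 + c1 * t + c2 * z^2) * g2 (j (0,0))))
     + j (2,0) * (- (p1 * t + p0) + (c0 + c1 * t + c2 * z^2) * g1 (j (0,0)))
     + j (2,1) * (- (b2 * t^2 + b1 * t + b0)) + j (3,0) * (- ((p1 * t + p0) * z))"
proof -
  have pd_z_char_z: "pd_z ansatz_char_z z t j
      = 2 * c2 * g (j (0,0)) + j (1,0) * 2 * c2 * z * g1 (j (0,0)) - (p1 * t + p0) * j (2,0)"
    unfolding pd_z_def
    by (rule DERIV_imp_deriv) (auto intro!: derivative_eq_intros simp: algebra_simps)
  have pd_j_char_z: "pd_j (0,0) ansatz_char_z z t j
      = 2 * c2 * z * g1 (j (0,0)) + j (1,0) * ((c0 + c1 * t + c2 * z^2) * g2 (j (0,0)))"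
    "pd_j (1,0) ansatz_char_z z t j = - (p1 * t + p0) + (c0 + c1 * t + c2 * z^2) * g1 (j (0,0))"
    "pd_j (1,1) ansatz_char_z z t j = - (b2 * t^2 + b1 * t + b0)"
    "pd_j (2,0) ansatz_char_z z t j = - ((p1 * t + p0) * z)"
    "pd_j (0,1) ansatz_char_z z t j = 0"
    "pd_j (0,2) ansatz_char_z z t j = 0"
    unfolding pd_j_def by (auto intro!: DERIV_imp_deriv derivative_eq_intros gD g1D)
  show ?thesis
    unfolding tot_z_ansatz_char tot_z_expand pd_z_char_z pd_j_char_z by (simp add: algebra_simps)
qed

lemma admits_symmetry_ansatz:
  fixes K K2 :: "real \<Rightarrow> real" and \<beta> \<nu> :: real
  assumes KD: "\<And>x. (K has_real_derivative deriv K x) (at x)"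
    and K1D: "\<And>x. (deriv K has_real_derivative K2 x) (at x)"
    and Kpos: "\<And>x. K x > 0"
    and Kg_D: "\<And>x. K x * g1 x + deriv K x * g x = K x"
    and Kg_DD: "\<And>x. K x * g2 x + 2 * deriv K x * g1 x + K2 x * g x = deriv K x"
    and coeffs: "b2 = p1" "b1 = 2 * p0" "c1 = - (1 + \<nu>) * p1 / 2" "c2 = - \<beta> * p1 / 4"
  shows "admits_symmetry (\<lambda>z t u. (p1 * t + p0) * z) (\<lambda>z t u. b2 * t^2 + b1 * t + b0)
     (\<lambda>z t u. (c0 + c1 * t + c2 * z^2) * g u) (diff_eq \<nu> (\<lambda>u. \<beta> * K u) K) (\<lambda>z t. z > 0)"
  unfolding admits_symmetry_def
proof (intro allI impI)
  fix z t :: real and j :: jet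
  let ?\<xi> = "\<lambda>z t u. (p1 * t + p0) * z" and ?\<tau> = "\<lambda>z t u. b2 * t^2 + b1 * t + b0"
    and ?\<eta> = "\<lambda>z t u. (c0 + c1 * t + c2 * z^2) * g u"
    and ?F = "diff_eq \<nu> (\<lambda>u. \<beta> * K u) K"
  assume "z > 0" and F0: "?F z t j = 0"
  then have "z \<noteq> 0" by simp
  note F_partials = partials_diff_eq[OF KD K1D this]
  have prol2_expand: "prol2 ?\<xi> ?\<tau> ?\<eta> ?F z t j
    = (p1 * t + p0) * z * pd_z ?F z t j + (b2 * t^2 + b1 * t + b0) * pd_t ?F z t j
      + (ansatz_char z t j + (p1 * t + p0) * z * j (1,0) + (b2 * t^2 + b1 * t + b0) * j (0,1))
        * pd_j (0,0) ?F z t j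
      + (tot_z ansatz_char z t j + (p1 * t + p0) * z * j (2,0)
         + (b2 * t^2 + b1 * t + b0) * j (1,1)) * pd_j (1,0) ?F z t j
      + (tot_t ansatz_char z t j + (p1 * t + p0) * z * j (1,1)
         + (b2 * t^2 + b1 * t + b0) * j (0,2)) * pd_j (0,1) ?F z t j
      + (tot_z (tot_z ansatz_char) z t j + (p1 * t + p0) * z * j (3,0)
         + (b2 * t^2 + b1 * t + b0) * j (2,1)) * pd_j (2,0) ?F z t j"
    unfolding prol2_def sum_jet_idx_2 prol_coeff_def charac_ansatz
    using F_partials(7,8) \<open>z > 0\<close> by (simp add: numeral_2_eq_2 numeral_3_eq_3)
  define u where "u = j (0,0)"
  have "K u > 0" using Kpos by simp
  have u_zz:
    "j (2,0) = (\<beta> * K u * j (0,1) - deriv K u * (j (1,0))^2 - \<nu> / z * K u * j (1,0)) / K u"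
    using F0 \<open>K u > 0\<close> unfolding diff_eq_def u_def[symmetric] by (simp add: field_simps)
  have g1_u: "g1 u = (K u - deriv K u * g u) / K u"
    using Kg_D[of u] \<open>K u > 0\<close> by (simp add: field_simps)
  have g2_u: "g2 u = (deriv K u - 2 * deriv K u * g1 u - K2 u * g u) / K u"
    using Kg_DD[of u] \<open>K u > 0\<close> by (simp add: field_simps)
  show "prol2 ?\<xi> ?\<tau> ?\<eta> ?F z t j = 0"
    unfolding prol2_expand F_partials tot_t_ansatz_char tot_zz_ansatz_char
    unfolding tot_z_ansatz_char
    unfolding u_def[symmetric] u_zz g2_u g1_u coeffs
    using \<open>K u > 0\<close> \<open>z > 0\<close>
    by (simp add: field_simps) (simp add: algebra_simps power2_eq_square)
qed

end

lemma admits_symmetry_family: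
  fixes J K :: "real \<Rightarrow> real" and \<xi> \<tau> \<eta> :: "real \<Rightarrow> real \<Rightarrow> real \<Rightarrow> real"
    and a b c d \<beta> \<nu> :: real
  assumes JD: "\<And>x. (J has_real_derivative K x) (at x)"
    and KD: "\<And>x. (K has_real_derivative deriv K x) (at x)"
    and K1D: "\<And>x. (deriv K has_real_derivative deriv (deriv K) x) (at x)"
    and Kpos: "\<And>x. K x > 0"
    and \<xi>: "\<And>z t u. \<xi> z t u = (a * t + b) * z"
    and \<tau>: "\<And>z t u. \<tau> z t u = a * t^2 + 2 * b * t + c"
    and \<eta>: "\<And>z t u. \<eta> z t u = (d - (1 + \<nu>) / 2 * a * t - \<beta> / 4 * a * z^2) * (J u / K u)"
  shows "admits_symmetry \<xi> \<tau> \<eta> (diff_eq \<nu> (\<lambda>u. \<beta> * K u) K) (\<lambda>z t. z > 0)"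
proof -
  have "K x \<noteq> 0" for x
    using Kpos[of x] by simp
  then obtain g1 g2 where g_derivs:
    "\<And>x. ((\<lambda>x. J x / K x) has_real_derivative g1 x) (at x)"
    "\<And>x. (g1 has_real_derivative g2 x) (at x)"
    "\<And>x. K x * g1 x + deriv K x * (J x / K x) = K x"
    "\<And>x. K x * g2 x + 2 * deriv K x * g1 x + deriv (deriv K) x * (J x / K x) = deriv K x"
    using antiderivative_div_has_derivatives[OF JD KD K1D] by blast
  have "admits_symmetry (\<lambda>z t u. (a * t + b) * z) (\<lambda>z t u. a * t^2 + (2 * b) * t + c)
     (\<lambda>z t u. (d + (- (1 + \<nu>) * a / 2) * t + (- \<beta> * a / 4) * z^2) * (J u / K u))
     (diff_eq \<nu> (\<lambda>u. \<beta> * K u) K) (\<lambda>z t. z > 0)"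
    by (rule admits_symmetry_ansatz[where g = "\<lambda>x. J x / K x"])
      (use g_derivs KD K1D Kpos in auto)
  moreover have "\<xi> = (\<lambda>z t u. (a * t + b) * z)" "\<tau> = (\<lambda>z t u. a * t^2 + (2 * b) * t + c)"
    "\<eta> = (\<lambda>z t u. (d + (- (1 + \<nu>) * a / 2) * t + (- \<beta> * a / 4) * z^2) * (J u / K u))"
    by (simp_all add: fun_eq_iff \<xi> \<tau> \<eta> field_simps)
  ultimately show ?thesis
    by simp
qed

theorem mainTheorem4:
  fixes \<nu> \<beta> :: real and K C J :: "real \<Rightarrow> real"
  assumes "\<nu> > 0" and "\<nu> \<noteq> 2"
    and "smooth_fun K" and "\<forall>u. K u > 0"
    and "\<forall>u. C u = \<beta> * K u"
    and "\<forall>u. (J has_real_derivative K u) (at u)"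
  shows "admits_symmetry (\<lambda>z t u. t * z) (\<lambda>z t u. t^2)
           (\<lambda>z t u. - (\<beta> / 4 * z^2 + (1 + \<nu>) / 2 * t) * (J u / K u))
           (diff_eq \<nu> C K) (\<lambda>z t. z > 0)
    \<and> admits_symmetry (\<lambda>z t u. z / 2) (\<lambda>z t u. t) (\<lambda>z t u. 0)
           (diff_eq \<nu> C K) (\<lambda>z t. z > 0)
    \<and> admits_symmetry (\<lambda>z t u. 0) (\<lambda>z t u. 1) (\<lambda>z t u. 0)
           (diff_eq \<nu> C K) (\<lambda>z t. z > 0)
    \<and> admits_symmetry (\<lambda>z t u. 0) (\<lambda>z t u. 0) (\<lambda>z t u. - (J u / K u))
           (diff_eq \<nu> C K) (\<lambda>z t. z > 0)"
proof -
  have JD: "\<And>x. (J has_real_derivative K x) (at x)" and Kpos: "\<And>x. K x > 0"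
    using assms(4,6) by simp_all
  have KD: "\<And>x. (K has_real_derivative deriv K x) (at x)"
    and K1D: "\<And>x. (deriv K has_real_derivative deriv (deriv K) x) (at x)"
    using smooth_fun_has_real_derivative[OF \<open>smooth_fun K\<close>, of 0]
      smooth_fun_has_real_derivative[OF \<open>smooth_fun K\<close>, of 1] by simp_all
  note family = admits_symmetry_family[OF JD KD K1D Kpos]
  have C_eq: "C = (\<lambda>u. \<beta> * K u)"
    using assms(5) by auto
  show ?thesis
    unfolding C_eq
    by (intro conjI family[where a = 1 and b = 0 and c = 0 and d = 0]
          family[where a = 0 and b = "1/2" and c = 0 and d = 0]
          family[where a = 0 and b = 0 and c = 1 and d = 0]
          family[where a = 0 and b = 0 and c = 0 and d = "-1"])
      (simp_all add: algebra_simps)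
qed

end
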